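(* Let $r\geq 1$ and $n_1,\ldots,n_r>1$ be integers, let $R=\mathbb{Z}_{n_1}\oplus\cdots\oplus \mathbb{Z}_{n_r}$ be the direct sum of the residue class rings $\mathbb{Z}_{n_1},\ldots,\mathbb{Z}_{n_r}$, let $\mathcal{S}_R$ be the multiplicative semigroup of the ring $R$, and let ${\rm U}(\mathcal{S}_R)$ be the group of units of $\mathcal{S}_R$. Then $${\rm D}({\rm U}(\mathcal{S}_R))+P_2\leq {\rm D}(\mathcal{S}_R)\leq {\rm D}({\rm U}(\mathcal{S}_R))+\delta,$$ where $P_2=\#\{i\in [1,r]: 2 \parallel n_i\}$ (i.e. $2\mid n_i$ but $4\nmid n_i$) and $\delta=\#\{i\in [1,r]: 2\mid n_i\}$.
   Context: For a finite commutative semigroup $\mathcal{S}$ (with operation written $+$), a sequence $T=a_1a_2\cdots a_\ell$ of elements of $\mathcal{S}$ (a finite multiset; order irrelevant) is called reducible if there is a proper subsequence $T'$ of $T$ (possibly empty, a sub-multiset different from $T$) whose sum equals the sum of all terms of $T$; the sum of the empty sequence is the identity element of $\mathcal{S}$ (here $\mathcal{S}$ has an identity). The Davenport constant ${\rm D}(\mathcal{S})$ is the smallest positive integer $\ell$ such that every sequence of elements of $\mathcal{S}$ of length at least $\ell$ is reducible. For a finite abelian group $G$ this coincides with the classical Davenport constant: the smallest $\ell$ such that every sequence of $\ell$ elements of $G$ has a nonempty subsequence summing to the identity. The semigroup $\mathcal{S}_R$ has as its operation the ring multiplication of $R$ (written additively as $+$ in the semigroup), with identity element $(\overline{1},\ldots,\overline{1})$;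 ${\rm U}(\mathcal{S}_R)$ is the set of elements having an inverse under this operation. *)

theory Defs
  imports Main "HOL-Library.Multiset"
begin

text \<open>A finite commutative monoid is given by a carrier S, an operation f
(written additively in the paper) and an identity e.\<close>

definition seq_sum :: "('a \<Rightarrow> 'a \<Rightarrow> 'a) \<Rightarrow> 'a \<Rightarrow> 'a multiset \<Rightarrow> 'a" where
  "seq_sum f e T = fold_mset f e T"

definition reducible :: "('a \<Rightarrow> 'a \<Rightarrow> 'a) \<Rightarrow> 'a \<Rightarrow> 'a multiset \<Rightarrow> bool" where
  "reducible f e T \<longleftrightarrow> (\<exists>T'. T' \<subset># T \<and> seq_sum f e T' = seq_sum f e T)"

definition davenport :: "'a set \<Rightarrow> ('a \<Rightarrow> 'a \<Rightarrow> 'a) \<Rightarrow> 'a \<Rightarrow> nat" where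
  "davenport S f e = (LEAST l. 0 < l \<and>
     (\<forall>T. set_mset T \<subseteq> S \<and> l \<le> size T \<longrightarrow> reducible f e T))"

definition monoid_units :: "'a set \<Rightarrow> ('a \<Rightarrow> 'a \<Rightarrow> 'a) \<Rightarrow> 'a \<Rightarrow> 'a set" where
  "monoid_units S f e = {x \<in> S. \<exists>y \<in> S. f x y = e \<and> f y x = e}"

text \<open>The ring R = Z_{n_0} (+) ... (+) Z_{n_(r-1)}: elements are functions
nat => nat with x i < n i for i < r and x i = 0 for i >= r (canonical
representatives).  S_R is its multiplicative monoid.\<close>
definition SR_carrier :: "nat \<Rightarrow> (nat \<Rightarrow> nat) \<Rightarrow> (nat \<Rightarrow> nat) set" where
  "SR_carrier r n = {x. (\<forall>i<r. x i < n i) \<and> (\<forall>i. r \<le> i \<longrightarrow> x i = 0)}"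

definition SR_mult :: "nat \<Rightarrow> (nat \<Rightarrow> nat) \<Rightarrow> (nat \<Rightarrow> nat) \<Rightarrow> (nat \<Rightarrow> nat) \<Rightarrow> (nat \<Rightarrow> nat)" where
  "SR_mult r n x y = (\<lambda>i. if i < r then (x i * y i) mod n i else 0)"

definition SR_one :: "nat \<Rightarrow> (nat \<Rightarrow> nat) \<Rightarrow> (nat \<Rightarrow> nat)" where
  "SR_one r n = (\<lambda>i. if i < r then 1 mod n i else 0)"

end

theory Submission
  imports Defs "HOL-Number_Theory.Number_Theory"
begin

text \<open>
Lower bound: a longest irreducible sequence of units stays irreducible after appending,
for every i with 2 \<parallel> n i, the element that is n i / 2 + 1 in coordinate i and 1 elsewhere.
These elements are the only non-units, none can be dropped because each makes its coordinate
of the product even, and once all are present they cancel from products of units.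

Upper bound: let z 0, ..., z (l - 1) be irreducible with prefix products X t. Call step t a
unit step if X (t + 1) = g X t for a unit g, and a stabilizer step if some unit fixes
X (t + 1) but not X t. The chosen units g resp. h form an irreducible sequence of units, so
there are fewer than D(U) such steps. At every other step some coordinate i with n i even
has n i / gcd (X t i) (n i) even and n i / gcd (X (t + 1) i) (n i) odd; since these
cofactors only decrease in the divisibility order, each coordinate serves at most one step.
\<close>

lemma coprime_if_no_common_prime:
  fixes u n :: nat
  assumes "\<And>p. prime p \<Longrightarrow> p dvd n \<Longrightarrow> \<not> p dvd u"
  shows "coprime u n"
proof (rule ccontr)
  assume "\<not> coprime u n"
  then obtain p where "prime p" "p dvd gcd u n"
    using prime_factor_nat coprime_iff_gcd_eq_1 by blast
  then show False using assms[of p] by auto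
qed

text \<open>Add to v a multiple of m whose prime divisors are exactly the primes of n not
dividing v.\<close>
lemma exists_coprime_lift:
  fixes m n v :: nat
  assumes "m dvd n" "0 < n" "coprime v m"
  shows "\<exists>u. coprime u n \<and> [u = v] (mod m)"
proof -
  define Q where "Q = {p. prime p \<and> p dvd n \<and> \<not> p dvd v}"
  have "finite Q" unfolding Q_def
    using finite_divisors_nat[OF assms(2)] by (rule finite_subset[rotated]) auto
  have dvd_prod_Q: "p dvd \<Prod>Q \<longleftrightarrow> p \<in> Q" if "prime p" for p
  proof -
    have "p dvd \<Prod>Q \<longleftrightarrow> (\<exists>q\<in>Q. p dvd q)"
      using prime_dvd_prod_iff[OF \<open>finite Q\<close> that, of id] by simp
    also have "\<dots> \<longleftrightarrow> p \<in> Q"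
      using that by (auto simp: Q_def dest: primes_dvd_imp_eq)
    finally show ?thesis .
  qed
  define u where "u = v + m * \<Prod>Q"
  have "coprime u n"
  proof (rule coprime_if_no_common_prime)
    fix p :: nat assume p: "prime p" "p dvd n"
    show "\<not> p dvd u"
    proof (cases "p dvd v")
      case True
      then have "\<not> p dvd m" using assms(3) p(1)
        by (meson coprime_common_divisor not_prime_unit)
      moreover have "\<not> p dvd \<Prod>Q" using dvd_prod_Q[OF p(1)] True by (simp add: Q_def)
      ultimately have "\<not> p dvd m * \<Prod>Q" using p(1) by (simp add: prime_dvd_mult_iff)
      then show ?thesis using True unfolding u_def by (simp add: dvd_add_right_iff)
    next
      case False
      then have "p dvd m * \<Prod>Q" using dvd_prod_Q[OF p(1)] p by (simp add: Q_def)
      then show ?thesis using False unfolding u_def by (simp add: dvd_add_left_iff)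
    qed
  qed
  moreover have "[u = v] (mod m)" unfolding u_def by (simp add: cong_def)
  ultimately show ?thesis by blast
qed

lemma coprime_cofactors_gcd:
  fixes a n d :: nat
  assumes "gcd a n = d" "0 < d" "a = d * a'" "n = d * m"
  shows "coprime a' m"
proof -
  have "d * gcd a' m = d * 1" using gcd_mult_left[of d a' m] assms by simp
  then show ?thesis using assms(2) by (intro coprime_iff_gcd_eq_1[THEN iffD2]) simp
qed

lemma cong_mult_self_iff_cong_one:
  fixes u a n :: nat
  assumes "0 < n"
  shows "[u * a = a] (mod n) \<longleftrightarrow> [u = 1] (mod n div gcd a n)"
proof -
  define d where "d = gcd a n"
  have "0 < d" using assms by (simp add: d_def)
  obtain a' where a': "a = d * a'" unfolding d_def by (meson gcd_dvd1 dvdE)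
  obtain m where m: "n = d * m" unfolding d_def by (meson gcd_dvd2 dvdE)
  have "coprime a' m" using coprime_cofactors_gcd[OF d_def[symmetric] \<open>0 < d\<close> a' m] .
  have "n div d = m" using m \<open>0 < d\<close> by simp
  have "[u * a = a] (mod n) \<longleftrightarrow> [u * a' = 1 * a'] (mod m)"
    unfolding a' m cong_def using \<open>0 < d\<close> by (simp add: mod_mult_mult1 mult.left_commute)
  also have "\<dots> \<longleftrightarrow> [u = 1] (mod m)" using \<open>coprime a' m\<close> by (rule cong_mult_rcancel_nat)
  finally show ?thesis using \<open>n div d = m\<close> by (simp add: d_def)
qed

lemma unit_multiple_if_gcd_eq:
  fixes a b n :: nat
  assumes "0 < n" "gcd a n = gcd b n"
  shows "\<exists>u. coprime u n \<and> [u * a = b] (mod n)"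
proof -
  define d where "d = gcd a n"
  have "0 < d" using assms(1) by (simp add: d_def)
  obtain a' where a': "a = d * a'" unfolding d_def by (meson gcd_dvd1 dvdE)
  obtain b' where b': "b = d * b'" unfolding d_def assms(2) by (meson gcd_dvd1 dvdE)
  obtain m where m: "n = d * m" unfolding d_def by (meson gcd_dvd2 dvdE)
  have "coprime a' m" using coprime_cofactors_gcd[OF d_def[symmetric] \<open>0 < d\<close> a' m] .
  have "gcd b n = d" using assms(2) by (simp add: d_def)
  then have "coprime b' m" using coprime_cofactors_gcd \<open>0 < d\<close> b' m by blast
  obtain w where w: "[a' * w = 1] (mod m)"
    using cong_solve_coprime_nat[OF \<open>coprime a' m\<close>] by auto
  have "coprime w m" using cong_imp_coprime[OF cong_sym[OF w]] by simp
  then obtain u where u: "coprime u n" "[u = b' * w] (mod m)"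
    using exists_coprime_lift[OF _ assms(1), of m "b' * w"] \<open>coprime b' m\<close> m by auto
  have "[u * a' = b' * (a' * w)] (mod m)"
    using cong_scalar_right[OF u(2), of a'] by (simp add: ac_simps)
  also have "[b' * (a' * w) = b' * 1] (mod m)" using w by (rule cong_scalar_left)
  finally have "[u * a' = b'] (mod m)" by simp
  then have "[d * (u * a') = d * b'] (mod d * m)" by (simp add: cong_def mod_mult_mult1)
  then have "[u * a = b] (mod n)" by (simp add: a' b' m ac_simps)
  with u(1) show ?thesis by blast
qed

lemma exists_inverse_mod_prime:
  fixes p k :: nat
  assumes "prime p"
  shows "\<exists>t. \<not> p dvd t \<and> (\<not> p dvd k \<longrightarrow> [k * t = 1] (mod p))"
proof (cases "p dvd k")
  case True
  then show ?thesis using prime_gt_1_nat[OF assms] by (intro exI[of _ 1]) simp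
next
  case False
  then have "coprime k p" using prime_imp_coprime[OF assms] by (simp add: coprime_commute)
  then obtain t where t: "[k * t = 1] (mod p)" using cong_solve_coprime_nat by auto
  moreover have "\<not> p dvd t"
  proof
    assume "p dvd t"
    then have "[k * t = 0] (mod p)" by (simp add: cong_0_iff)
    then have "p dvd 1" using t by (metis cong_0_iff cong_sym cong_trans)
    then show False using assms by simp
  qed
  ultimately show ?thesis by blast
qed

lemma coprime_one_add_cofactor_mult:
  fixes p k t :: nat
  assumes "prime p" "\<not> p dvd k \<Longrightarrow> [k * t = 1] (mod p) \<and> odd p"
  shows "coprime (1 + k * t) (p * k)"
proof (rule coprime_if_no_common_prime)
  fix q :: nat assume q: "prime q" "q dvd p * k"
  show "\<not> q dvd 1 + k * t"
  proof
    assume "q dvd 1 + k * t"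
    show False
    proof (cases "q dvd k")
      case True
      then have "q dvd k * t" by simp
      then have "q dvd 1" using \<open>q dvd 1 + k * t\<close> by (simp only: dvd_add_left_iff)
      then show False using q(1) by simp
    next
      case False
      then have "q = p" using q assms(1) by (metis prime_dvd_mult_iff primes_dvd_imp_eq)
      then have "[k * t = 1] (mod p)" "odd p" using assms(2) False by blast+
      then have "[1 + k * t = 1 + 1] (mod p)" by (intro cong_add cong_refl)
      then have "p dvd 2" using \<open>q dvd 1 + k * t\<close> \<open>q = p\<close> by (simp add: cong_dvd_iff numeral_2_eq_2)
      then show False using primes_dvd_imp_eq[OF assms(1) two_is_prime_nat] \<open>odd p\<close> by auto
    qed
  qed
qed

text \<open>The witness is 1 + (m/p) t, with t = 1 if p divides m/p and t an inverse of m/p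
modulo p otherwise; in the latter case 1 + (m/p) t is 2 modulo p, which needs p odd.\<close>
lemma exists_unit_cong_one_not_cong_one_prime:
  fixes m m' p :: nat
  assumes "m' dvd m" "0 < m" "prime p" "p dvd m div m'" "p * p dvd m \<or> odd p"
  shows "\<exists>v. coprime v m \<and> [v = 1] (mod m') \<and> \<not> [v = 1] (mod m)"
proof -
  obtain f where "m div m' = p * f" using assms(4) ..
  then have f: "m = m' * (p * f)" using assms(1) by (metis dvd_mult_div_cancel)
  define k where "k = m' * f"
  have m: "m = p * k" using f by (simp add: k_def)
  have "0 < k" using m assms(2) by simp
  obtain t where t: "\<not> p dvd t" "\<not> p dvd k \<longrightarrow> [k * t = 1] (mod p)"
    using exists_inverse_mod_prime[OF assms(3)] by blast
  define v where "v = 1 + k * t"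
  have "[v = 1 + 0] (mod m')" unfolding v_def k_def by (intro cong_add cong_refl) (simp add: cong_0_iff)
  then have "[v = 1] (mod m')" by simp
  moreover have "\<not> [v = 1] (mod m)"
  proof
    assume "[v = 1] (mod m)"
    then have "p * k dvd k * t" unfolding v_def m
      by (metis add.commute cong_add_lcancel_0_nat cong_0_iff)
    then have "p dvd t" using \<open>0 < k\<close> by (simp add: mult.commute)
    then show False using t(1) by blast
  qed
  moreover have "odd p" if "\<not> p dvd k"
    using assms(5) that m prime_gt_0_nat[OF assms(3)] by auto
  then have "coprime v m"
    unfolding v_def m using coprime_one_add_cofactor_mult[OF assms(3)] t(2) by blast
  ultimately show ?thesis by blast
qed

lemma exists_prime_dvd_cofactor:
  fixes m' e :: nat
  assumes "e \<noteq> 1" "\<not> (e = 2 \<and> odd m')"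
  shows "\<exists>p. prime p \<and> p dvd e \<and> (p * p dvd m' * e \<or> odd p)"
proof -
  obtain p where p: "prime p" "p dvd e" using assms(1) prime_factor_nat by blast
  show ?thesis
  proof (cases "p * p dvd m' * e \<or> odd p")
    case True
    then show ?thesis using p by blast
  next
    case False
    then have "p = 2" using p(1) prime_odd_nat[of p] prime_ge_2_nat[of p] by force
    then have "\<not> 4 dvd m' * e" using False by simp
    obtain e2 where e2: "e = 2 * e2" using p \<open>p = 2\<close> by (auto elim: dvdE)
    have "odd m'" using \<open>\<not> 4 dvd m' * e\<close> e2 by auto
    then have "e2 \<noteq> 1" using e2 assms(2) by auto
    then obtain q where q: "prime q" "q dvd e2" using prime_factor_nat by blast
    have "q \<noteq> 2" using q(2) e2 \<open>\<not> 4 dvd m' * e\<close> by auto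
    then have "odd q" using q(1) prime_odd_nat[of q] prime_ge_2_nat[of q] by force
    then show ?thesis using q e2 by auto
  qed
qed

lemma exists_unit_cong_one_not_cong_one:
  fixes m m' n :: nat
  assumes "m' dvd m" "0 < m'" "m' < m" "\<not> (m = 2 * m' \<and> odd m')" "m dvd n" "0 < n"
  shows "\<exists>u. coprime u n \<and> [u = 1] (mod m') \<and> \<not> [u = 1] (mod m)"
proof -
  obtain e where e: "m = m' * e" using assms(1) ..
  then have "e \<noteq> 1" "\<not> (e = 2 \<and> odd m')" using assms(3,4) by auto
  then obtain p where "prime p" "p dvd m div m'" "p * p dvd m \<or> odd p"
    using exists_prime_dvd_cofactor e assms(2) by auto
  then obtain v where v: "coprime v m" "[v = 1] (mod m')" "\<not> [v = 1] (mod m)"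
    using exists_unit_cong_one_not_cong_one_prime[OF assms(1)] assms(3) by auto
  obtain u where u: "coprime u n" "[u = v] (mod m)"
    using exists_coprime_lift[OF assms(5,6) v(1)] by blast
  have "[u = 1] (mod m')" using cong_dvd_modulus_nat[OF u(2) assms(1)] v(2) cong_trans by blast
  moreover have "\<not> [u = 1] (mod m)" using u(2) v(3) cong_trans cong_sym by blast
  ultimately show ?thesis using u(1) by blast
qed

lemma div_gcd_dvd_div_gcd:
  fixes a b n :: nat
  assumes "a dvd b" "0 < n"
  shows "n div gcd b n dvd n div gcd a n"
proof -
  define g where "g = gcd a n"
  define g' where "g' = gcd b n"
  have "0 < g" "0 < g'" using assms(2) by (simp_all add: g_def g'_def)
  have "g dvd g'" unfolding g_def g'_def using assms(1) by (meson dvd_trans gcd_dvd1 gcd_dvd2 gcd_greatest)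
  then obtain q where q: "g' = g * q" ..
  obtain k where k: "n = g' * k" unfolding g'_def by (meson gcd_dvd2 dvdE)
  have "n div g = q * k" "n div g' = k" using q k \<open>0 < g\<close> \<open>0 < g'\<close> by (simp_all add: mult.assoc)
  then show ?thesis by (simp add: g_def g'_def)
qed

lemma div_div_dvd_self:
  fixes g n :: nat
  assumes "g dvd n" "0 < n"
  shows "n div (n div g) = g"
  using assms
  by (metis dvd_div_mult_self dvd_mult_div_cancel gr_implies_not0 mult_is_0 nonzero_mult_div_cancel_right)

lemma dvd_step_cases:
  fixes n a b :: nat
  assumes "0 < n" "a dvd b"
  shows "(\<exists>u. coprime u n \<and> [u * a = b] (mod n))
       \<or> (\<exists>u. coprime u n \<and> [u * b = b] (mod n) \<and> \<not> [u * a = a] (mod n))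
       \<or> (even (n div gcd a n) \<and> odd (n div gcd b n))"
proof (cases "gcd a n = gcd b n")
  case True
  then show ?thesis using unit_multiple_if_gcd_eq[OF assms(1)] by blast
next
  case False
  define m where "m = n div gcd a n"
  define m' where "m' = n div gcd b n"
  have "m' dvd m" unfolding m_def m'_def by (rule div_gcd_dvd_div_gcd[OF assms(2,1)])
  moreover have "0 < m'" "0 < m" using assms(1) by (simp_all add: m_def m'_def div_greater_zero_iff gcd_le2_nat)
  moreover have "m' \<noteq> m"
    using False div_div_dvd_self[OF gcd_dvd2 assms(1)] unfolding m_def m'_def by metis
  ultimately have "m' < m" by (simp add: nat_dvd_not_less order_le_neq_trans dvd_imp_le)
  show ?thesis
  proof (cases "m = 2 * m' \<and> odd m'")
    case True
    then show ?thesis by (simp add: m_def m'_def)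
  next
    case False
    moreover have "m dvd n" using assms(1) by (simp add: m_def div_dvd_iff_mult)
    ultimately obtain u where "coprime u n" "[u = 1] (mod m')" "\<not> [u = 1] (mod m)"
      using exists_unit_cong_one_not_cong_one \<open>m' dvd m\<close> \<open>0 < m'\<close> \<open>m' < m\<close> assms(1) by blast
    then show ?thesis
      using cong_mult_self_iff_cong_one[OF assms(1)] unfolding m_def m'_def by blast
  qed
qed

lemma cong_prod_fixes:
  fixes F :: "'b \<Rightarrow> nat"
  assumes "finite W" "\<And>u. u \<in> W \<Longrightarrow> [F u * x = x] (mod m)"
  shows "[(\<Prod>u\<in>W. F u) * x = x] (mod m)"
  using assms
proof (induction W rule: finite_induct)
  case (insert a W)
  then have "[F a * ((\<Prod>u\<in>W. F u) * x) = F a * x] (mod m)" by (intro cong_scalar_left) simp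
  also have "[F a * x = x] (mod m)" using insert by simp
  finally show ?case using insert by (simp add: mult.assoc)
qed simp

lemma cong_cancel_half_plus_one:
  fixes m u v :: nat
  assumes "odd m" "odd u" "odd v" "[u * (m + 1) = v * (m + 1)] (mod 2 * m)"
  shows "[u = v] (mod 2 * m)"
proof -
  have "[m + 1 = 0 + 1] (mod m)" by (intro cong_add) (simp_all add: cong_0_iff)
  then have "[u * (m + 1) = u] (mod m)" "[v * (m + 1) = v] (mod m)"
    using cong_scalar_left by fastforce+
  moreover have "[u * (m + 1) = v * (m + 1)] (mod m)"
    using assms(4) by (rule cong_modulus_mult_nat[of _ _ m 2, unfolded mult.commute[of m 2]])
  ultimately have "[u = v] (mod m)" by (metis cong_sym cong_trans)
  moreover have "[u = v] (mod 2)" using assms(2,3) by (simp add: cong_def odd_iff_mod_2_eq_one)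
  moreover have "coprime 2 m" using assms(1) by simp
  ultimately show ?thesis using coprime_cong_mult_nat by (metis mult.commute)
qed

lemma subset_image_mset_mset_set:
  assumes "finite K" "M \<subseteq># image_mset w (mset_set K)"
  shows "\<exists>J\<subseteq>K. M = image_mset w (mset_set J)"
  using assms
proof (induction K arbitrary: M rule: finite_induct)
  case empty
  then show ?case by simp
next
  case (insert a K)
  then have M: "M \<subseteq># add_mset (w a) (image_mset w (mset_set K))" by simp
  show ?case
  proof (cases "w a \<in># M")
    case True
    then obtain M' where M': "M = add_mset (w a) M'" by (blast dest: multi_member_split)
    then have "M' \<subseteq># image_mset w (mset_set K)"
      using M by (simp only: mset_subset_eq_add_mset_cancel)
    then obtain J where J: "J \<subseteq> K" "M' = image_mset w (mset_set J)" using insert.IH by blast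
    have "finite J" "a \<notin> J" using J insert(1,2) finite_subset by blast+
    then have "M = image_mset w (mset_set (insert a J))" using J M' by simp
    then show ?thesis using J by blast
  next
    case False
    have "M \<subseteq># image_mset w (mset_set K)"
    proof (rule mset_subset_eqI)
      fix x
      show "count M x \<le> count (image_mset w (mset_set K)) x"
        using mset_subset_eq_count[OF M, of x] False by (cases "x = w a") (auto simp: not_in_iff)
    qed
    then show ?thesis using insert.IH by blast
  qed
qed

lemma filter_mset_subset_of_add:
  assumes "T \<subseteq># A + B" "\<forall>x\<in>#A. P x" "\<forall>x\<in>#B. \<not> P x"
  shows "filter_mset P T \<subseteq># A" "filter_mset (\<lambda>x. \<not> P x) T \<subseteq># B"
proof -
  have "filter_mset P A = A" "filter_mset (\<lambda>x. \<not> P x) B = B"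
    using assms(2,3) by (auto simp: filter_mset_eq_conv)
  moreover have "filter_mset P B = {#}" "filter_mset (\<lambda>x. \<not> P x) A = {#}"
    using assms(2,3) by auto
  ultimately have "filter_mset P (A + B) = A" "filter_mset (\<lambda>x. \<not> P x) (A + B) = B" by simp_all
  then show "filter_mset P T \<subseteq># A" "filter_mset (\<lambda>x. \<not> P x) T \<subseteq># B"
    using multiset_filter_mono[OF assms(1)] by metis+
qed

lemma image_mset_mset_set_strict_mono:
  assumes "finite K" "J \<subset> K"
  shows "image_mset w (mset_set J) \<subset># image_mset w (mset_set K)"
proof -
  have "image_mset w (mset_set J) \<subseteq># image_mset w (mset_set K)"
    using assms by (intro image_mset_subseteq_mono subset_imp_msubset_mset_set) auto
  moreover have "card J < card K" using assms psubset_card_mono by blast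
  then have "size (image_mset w (mset_set J)) \<noteq> size (image_mset w (mset_set K))" by simp
  ultimately show ?thesis by (metis subset_mset.le_imp_less_or_eq)
qed

lemma ex_image_mset_lessThan: "\<exists>z. M = image_mset z (mset_set {..<size M})"
proof -
  obtain xs where "mset xs = M" using ex_mset by blast
  moreover have "mset xs = mset (map (nth xs) [0..<length xs])" by (simp add: map_nth)
  ultimately show ?thesis by (auto simp: atLeast0LessThan)
qed

definition reducible_from :: "'a set \<Rightarrow> ('a \<Rightarrow> 'a \<Rightarrow> 'a) \<Rightarrow> 'a \<Rightarrow> nat \<Rightarrow> bool" where
  "reducible_from X f e l \<longleftrightarrow> (\<forall>T. set_mset T \<subseteq> X \<and> l \<le> size T \<longrightarrow> reducible f e T)"

lemma not_reducible_empty: "\<not> reducible f e {#}"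
  by (simp add: reducible_def)

lemma davenport_eq_Least: "davenport X f e = (LEAST l. 0 < l \<and> reducible_from X f e l)"
  unfolding davenport_def reducible_from_def ..

lemma davenport_le:
  assumes "0 < l" "reducible_from X f e l"
  shows "davenport X f e \<le> l"
  unfolding davenport_eq_Least by (rule Least_le) (use assms in simp)

lemma davenport_minimal:
  assumes "reducible_from X f e l"
  shows "0 < davenport X f e" "reducible_from X f e (davenport X f e)"
proof -
  have "0 < Suc l \<and> reducible_from X f e (Suc l)" using assms by (auto simp: reducible_from_def)
  then have "0 < davenport X f e \<and> reducible_from X f e (davenport X f e)"
    unfolding davenport_eq_Least by (rule LeastI)
  then show "0 < davenport X f e" "reducible_from X f e (davenport X f e)" by blast+
qed

lemma size_less_davenport:
  assumes "reducible_from X f e l" "set_mset T \<subseteq> X" "\<not> reducible f e T"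
  shows "size T < davenport X f e"
proof (rule ccontr)
  assume "\<not> size T < davenport X f e"
  then show False using davenport_minimal(2)[OF assms(1)] assms(2,3) by (auto simp: reducible_from_def)
qed

lemma exists_irreducible_davenport:
  assumes "reducible_from X f e l"
  shows "\<exists>T. set_mset T \<subseteq> X \<and> \<not> reducible f e T \<and> davenport X f e - 1 \<le> size T"
proof (cases "davenport X f e = 1")
  case True
  then show ?thesis using not_reducible_empty[of f e] by (intro exI[of _ "{#}"]) simp
next
  case False
  then have "0 < davenport X f e - 1" using davenport_minimal(1)[OF assms] by simp
  moreover have "\<not> reducible_from X f e (davenport X f e - 1)"
    using davenport_le[of "davenport X f e - 1" X f e] calculation by linarith
  ultimately show ?thesis unfolding reducible_from_def by auto
qed

locale residue_ring_sum =
  fixes r :: nat and n :: "nat \<Rightarrow> nat"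
  assumes moduli_gt_1: "i < r \<Longrightarrow> 1 < n i"
begin

abbreviation "smul \<equiv> SR_mult r n"
abbreviation "sone \<equiv> SR_one r n"
abbreviation "SR \<equiv> SR_carrier r n"
abbreviation "USR \<equiv> monoid_units SR smul sone"

lemma moduli_pos: "i < r \<Longrightarrow> 0 < n i"
  using moduli_gt_1 by force

definition reduce :: "(nat \<Rightarrow> nat) \<Rightarrow> nat \<Rightarrow> nat" where
  "reduce x = (\<lambda>i. if i < r then x i mod n i else 0)"

lemma reduce_in_carrier: "reduce x \<in> SR"
  using moduli_pos by (auto simp: reduce_def SR_carrier_def)

lemma reduce_eq_iff: "reduce x = reduce y \<longleftrightarrow> (\<forall>i<r. [x i = y i] (mod n i))"
  by (auto simp: reduce_def cong_def fun_eq_iff)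

lemma reduce_cong: "i < r \<Longrightarrow> [reduce x i = x i] (mod n i)"
  by (simp add: reduce_def cong_def)

lemma smul_eq_reduce: "smul x y = reduce (\<lambda>i. x i * y i)"
  by (simp add: SR_mult_def reduce_def)

lemma sone_eq_reduce: "sone = reduce (\<lambda>_. 1)"
  unfolding SR_one_def reduce_def ..

lemma smul_commute: "smul x y = smul y x"
  by (simp add: smul_eq_reduce mult.commute)

lemma in_units_iff: "x \<in> USR \<longleftrightarrow> x \<in> SR \<and> (\<forall>i<r. coprime (x i) (n i))"
proof
  assume "x \<in> USR"
  then obtain y where "x \<in> SR" "smul x y = sone" by (auto simp: monoid_units_def)
  then have "[x i * y i = 1] (mod n i)" if "i < r" for i
    using that by (simp add: smul_eq_reduce sone_eq_reduce reduce_eq_iff)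
  then have "coprime (x i) (n i)" if "i < r" for i
    using that cong_imp_coprime[OF cong_sym] by (metis coprime_1_left coprime_mult_left_iff)
  with \<open>x \<in> SR\<close> show "x \<in> SR \<and> (\<forall>i<r. coprime (x i) (n i))" by blast
next
  assume x: "x \<in> SR \<and> (\<forall>i<r. coprime (x i) (n i))"
  then have "\<forall>i. \<exists>w. i < r \<longrightarrow> [x i * w = 1] (mod n i)"
    using cong_solve_coprime_nat by auto
  then obtain w where w: "\<And>i. i < r \<Longrightarrow> [x i * w i = 1] (mod n i)" by metis
  have "smul x (reduce w) = sone"
    unfolding smul_eq_reduce sone_eq_reduce reduce_eq_iff
    using w by (metis cong_scalar_left cong_trans reduce_cong)
  with x show "x \<in> USR"
    using reduce_in_carrier by (auto simp: monoid_units_def smul_commute)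
qed

lemma reduce_in_units_iff: "reduce x \<in> USR \<longleftrightarrow> (\<forall>i<r. coprime (x i) (n i))"
  using reduce_in_carrier moduli_pos by (auto simp: in_units_iff reduce_def)

lemma finite_carrier: "finite SR"
proof -
  have "SR \<subseteq> (\<lambda>f i. if i < r then f i else 0) ` (PiE {..<r} (\<lambda>i. {..<n i}))"
  proof
    fix x assume x: "x \<in> SR"
    then have "restrict x {..<r} \<in> PiE {..<r} (\<lambda>i. {..<n i})" by (auto simp: SR_carrier_def)
    moreover have "x = (\<lambda>i. if i < r then restrict x {..<r} i else 0)" using x by (auto simp: SR_carrier_def)
    ultimately show "x \<in> (\<lambda>f i. if i < r then f i else 0) ` (PiE {..<r} (\<lambda>i. {..<n i}))" by blast
  qed
  moreover have "finite (PiE {..<r} (\<lambda>i. {..<n i}))" by (intro finite_PiE) auto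
  ultimately show ?thesis using finite_subset by blast
qed

definition seq_prod :: "(nat \<Rightarrow> nat) multiset \<Rightarrow> nat \<Rightarrow> nat" where
  "seq_prod T = reduce (\<lambda>i. \<Prod>x\<in>#T. x i)"

definition index_prod :: "nat set \<Rightarrow> (nat \<Rightarrow> nat \<Rightarrow> nat) \<Rightarrow> nat \<Rightarrow> nat" where
  "index_prod J w = reduce (\<lambda>i. \<Prod>j\<in>J. w j i)"

lemma comp_fun_commute_smul: "comp_fun_commute smul"
  by unfold_locales (auto simp: SR_mult_def fun_eq_iff mod_mult_right_eq mult.left_commute)

lemma seq_sum_eq_seq_prod: "seq_sum smul sone T = seq_prod T"
proof (induction T)
  case empty
  show ?case by (simp add: seq_sum_def seq_prod_def sone_eq_reduce)
next
  case (add x T)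
  have "seq_sum smul sone (add_mset x T) = smul x (seq_sum smul sone T)"
    unfolding seq_sum_def by (simp add: comp_fun_commute.fold_mset_add_mset[OF comp_fun_commute_smul])
  also have "\<dots> = seq_prod (add_mset x T)"
    unfolding add by (auto simp: seq_prod_def SR_mult_def reduce_def mod_mult_right_eq)
  finally show ?case .
qed

lemma reducible_iff: "reducible smul sone T \<longleftrightarrow> (\<exists>T'. T' \<subset># T \<and> seq_prod T' = seq_prod T)"
  by (simp add: reducible_def seq_sum_eq_seq_prod)

lemma seq_prod_image: "seq_prod (image_mset w (mset_set J)) = index_prod J w"
  by (simp add: seq_prod_def index_prod_def prod_unfold_prod_mset multiset.map_comp o_def)

lemma reducible_image_iff:
  assumes "finite K"
  shows "reducible smul sone (image_mset w (mset_set K)) \<longleftrightarrow> (\<exists>J\<subset>K. index_prod J w = index_prod K w)"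
proof
  assume "reducible smul sone (image_mset w (mset_set K))"
  then obtain T' where T': "T' \<subset># image_mset w (mset_set K)" "seq_prod T' = index_prod K w"
    unfolding reducible_iff seq_prod_image by blast
  then obtain J where J: "J \<subseteq> K" "T' = image_mset w (mset_set J)"
    using subset_image_mset_mset_set[OF assms] by (meson subset_mset.less_imp_le)
  then have "J \<noteq> K" using T'(1) by auto
  then show "\<exists>J\<subset>K. index_prod J w = index_prod K w" using J T'(2) by (auto simp: seq_prod_image)
next
  assume "\<exists>J\<subset>K. index_prod J w = index_prod K w"
  then show "reducible smul sone (image_mset w (mset_set K))"
    unfolding reducible_iff seq_prod_image
    using image_mset_mset_set_strict_mono[OF assms] by (metis seq_prod_image)
qed

lemma index_prod_drop_block:
  assumes "a \<le> b" "b \<le> l" "index_prod {..<a} z = index_prod {..<b} z"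
  shows "index_prod ({..<a} \<union> {b..<l}) z = index_prod {..<l} z"
  unfolding index_prod_def reduce_eq_iff
proof (intro allI impI)
  fix i assume "i < r"
  have prefix: "[(\<Prod>j<a. z j i) = (\<Prod>j<b. z j i)] (mod n i)"
    using assms(3) \<open>i < r\<close> unfolding index_prod_def reduce_eq_iff by blast
  have "(\<Prod>j\<in>{..<a} \<union> {b..<l}. z j i) = (\<Prod>j<a. z j i) * (\<Prod>j\<in>{b..<l}. z j i)"
    using assms(1) by (intro prod.union_disjoint) auto
  moreover have "(\<Prod>j<l. z j i) = (\<Prod>j<b. z j i) * (\<Prod>j\<in>{b..<l}. z j i)"
    using prod.atLeastLessThan_concat[of 0 b l "\<lambda>j. z j i"] assms(2) by (simp add: atLeast0LessThan)
  ultimately show "[(\<Prod>j\<in>{..<a} \<union> {b..<l}. z j i) = (\<Prod>j<l. z j i)] (mod n i)"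
    using cong_mult[OF prefix cong_refl] by simp
qed

lemma exists_equal_prefix_prods:
  assumes "card SR < l"
  shows "\<exists>a b. a < b \<and> b \<le> l \<and> index_prod {..<a} z = index_prod {..<b} z"
proof -
  define s where "s t = index_prod {..<t} z" for t
  have "\<not> inj_on s {..l}"
  proof
    assume "inj_on s {..l}"
    then have "card (s ` {..l}) = Suc l" by (simp add: card_image)
    moreover have "s ` {..l} \<subseteq> SR" by (auto simp: s_def index_prod_def reduce_in_carrier)
    then have "card (s ` {..l}) \<le> card SR" using finite_carrier card_mono by blast
    ultimately show False using assms by simp
  qed
  then obtain a b where "a \<in> {..l}" "b \<in> {..l}" "a \<noteq> b" "s a = s b"
    unfolding inj_on_def by blast
  then show ?thesis unfolding s_def by (metis atMost_iff linorder_neqE_nat)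
qed

lemma reducible_from_card:
  assumes "X \<subseteq> SR"
  shows "reducible_from X smul sone (Suc (card SR))"
  unfolding reducible_from_def
proof (intro allI impI)
  fix T assume T: "set_mset T \<subseteq> X \<and> Suc (card SR) \<le> size T"
  define l where "l = size T"
  obtain z where T_eq: "T = image_mset z (mset_set {..<l})"
    unfolding l_def using ex_image_mset_lessThan by blast
  have "card SR < l" using T by (simp add: l_def)
  then obtain a b where ab: "a < b" "b \<le> l" "index_prod {..<a} z = index_prod {..<b} z"
    using exists_equal_prefix_prods by blast
  have "{..<a} \<union> {b..<l} \<subseteq> {..<l}" "a \<in> {..<l} - ({..<a} \<union> {b..<l})" using ab by auto
  then have "{..<a} \<union> {b..<l} \<subset> {..<l}" by blast
  then show "reducible smul sone T"
    using index_prod_drop_block[OF less_imp_le ab(2,3)] ab(1)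
    unfolding T_eq reducible_image_iff[OF finite_lessThan] by blast
qed

lemma units_subset_carrier: "USR \<subseteq> SR"
  by (auto simp: monoid_units_def)

lemma reducible_from_units: "reducible_from USR smul sone (Suc (card SR))"
  by (rule reducible_from_card[OF units_subset_carrier])

lemma reducible_from_carrier: "reducible_from SR smul sone (Suc (card SR))"
  by (rule reducible_from_card[OF order_refl])

lemma coprime_prod_units:
  assumes "set_mset B \<subseteq> USR" "i < r"
  shows "coprime (\<Prod>x\<in>#B. x i) (n i)"
  using assms by (induction B) (auto simp: in_units_iff)

text \<open>When 2 exactly divides n j, the residue n j / 2 + 1 is the idempotent of the j-th
component that is 0 modulo 2 and 1 modulo n j / 2.\<close>
definition half_idempotent :: "nat \<Rightarrow> nat \<Rightarrow> nat" where
  "half_idempotent j = reduce (\<lambda>i. if i = j then n j div 2 + 1 else 1)"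

lemma seq_prod_add_half_idempotents:
  assumes "finite J" "i < r"
  shows "seq_prod (B + image_mset half_idempotent (mset_set J)) i
       = ((\<Prod>x\<in>#B. x i) * (if i \<in> J then n i div 2 + 1 else 1)) mod n i"
proof -
  have "(\<Prod>j\<in>J. half_idempotent j i) = (\<Prod>j\<in>J. if j = i then (n i div 2 + 1) mod n i else 1)"
    using assms moduli_gt_1[OF assms(2)] by (intro prod.cong) (auto simp: half_idempotent_def reduce_def)
  also have "\<dots> = (if i \<in> J then (n i div 2 + 1) mod n i else 1)"
    using assms(1) by simp
  finally show ?thesis
    using assms by (auto simp: seq_prod_def reduce_def prod_unfold_prod_mset multiset.map_comp
        o_def mod_mult_right_eq)
qed

lemma half_idempotent_in_carrier: "half_idempotent j \<in> SR"
  by (simp add: half_idempotent_def reduce_in_carrier)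

lemma half_idempotent_not_unit:
  assumes "j < r" "2 dvd n j" "\<not> 4 dvd n j"
  shows "half_idempotent j \<notin> USR"
proof
  assume "half_idempotent j \<in> USR"
  then have "coprime ((n j div 2 + 1) mod n j) (n j)"
    using assms(1) by (auto simp: in_units_iff half_idempotent_def reduce_def)
  then have "coprime (n j div 2 + 1) (n j)" using moduli_pos[OF assms(1)] by simp
  moreover obtain k where k: "n j = 2 * k" using assms(2) ..
  then have "even (n j div 2 + 1)" using assms(3) by auto
  ultimately show False using assms(2) coprime_common_divisor[of _ "n j" 2] by auto
qed

lemma half_idempotents_not_removable:
  assumes "set_mset A' \<subseteq> USR" "I' \<subseteq> I" "I \<subseteq> {i. i < r \<and> 2 dvd n i \<and> \<not> 4 dvd n i}"
    and eq: "seq_prod (A' + image_mset half_idempotent (mset_set I'))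
           = seq_prod (A + image_mset half_idempotent (mset_set I))"
  shows "I' = I"
proof (rule ccontr)
  assume "I' \<noteq> I"
  then obtain j where j: "j \<in> I" "j \<notin> I'" using assms(2) by blast
  then have "j < r" "even (n j)" using assms(3) by auto
  have "finite I" using assms(3) by (rule finite_subset) auto
  then have "finite I'" using assms(2) finite_subset by blast
  have "seq_prod (A' + image_mset half_idempotent (mset_set I')) j = (\<Prod>x\<in>#A'. x j) mod n j"
    using seq_prod_add_half_idempotents[OF \<open>finite I'\<close> \<open>j < r\<close>] j by simp
  then have "coprime (seq_prod (A + image_mset half_idempotent (mset_set I)) j) (n j)"
    using eq coprime_prod_units[OF assms(1) \<open>j < r\<close>] moduli_pos[OF \<open>j < r\<close>] by simp
  moreover have "seq_prod (A + image_mset half_idempotent (mset_set I)) j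
      = ((\<Prod>x\<in>#A. x j) * (n j div 2 + 1)) mod n j"
    using seq_prod_add_half_idempotents[OF \<open>finite I\<close> \<open>j < r\<close>] j by simp
  moreover have "even (n j div 2 + 1)" using j assms(3) by (auto elim!: evenE)
  ultimately show False
    using \<open>even (n j)\<close> coprime_common_divisor[of _ "n j" 2] by (auto simp: dvd_mod_iff)
qed

lemma seq_prod_add_half_idempotents_cancel:
  assumes "set_mset A' \<subseteq> USR" "set_mset A \<subseteq> USR" "I \<subseteq> {i. i < r \<and> 2 dvd n i \<and> \<not> 4 dvd n i}"
    and eq: "seq_prod (A' + image_mset half_idempotent (mset_set I))
           = seq_prod (A + image_mset half_idempotent (mset_set I))"
  shows "seq_prod A' = seq_prod A"
  unfolding seq_prod_def reduce_eq_iff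
proof (intro allI impI)
  fix i assume "i < r"
  have "finite I" using assms(3) by (rule finite_subset) auto
  have prods: "[(\<Prod>x\<in>#A'. x i) * (if i \<in> I then n i div 2 + 1 else 1)
             = (\<Prod>x\<in>#A. x i) * (if i \<in> I then n i div 2 + 1 else 1)] (mod n i)"
    using eq seq_prod_add_half_idempotents[OF \<open>finite I\<close> \<open>i < r\<close>] unfolding cong_def by metis
  show "[(\<Prod>x\<in>#A'. x i) = (\<Prod>x\<in>#A. x i)] (mod n i)"
  proof (cases "i \<in> I")
    case False
    then show ?thesis using prods by simp
  next
    case True
    then obtain m where m: "n i = 2 * m" "odd m" using assms(3) by (auto elim!: evenE)
    have "odd (\<Prod>x\<in>#B. x i)" if "set_mset B \<subseteq> USR" for B
      using coprime_prod_units[OF that \<open>i < r\<close>] m(1) by auto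
    then show ?thesis
      using cong_cancel_half_plus_one[OF m(2)] prods True m assms(1,2) by simp
  qed
qed

lemma irreducible_add_half_idempotents:
  assumes A: "set_mset A \<subseteq> USR" "\<not> reducible smul sone A"
    and I: "I \<subseteq> {i. i < r \<and> 2 dvd n i \<and> \<not> 4 dvd n i}"
  shows "\<not> reducible smul sone (A + image_mset half_idempotent (mset_set I))"
proof
  define E where "E = image_mset half_idempotent (mset_set I)"
  have "finite I" using I by (rule finite_subset) auto
  have E_nonunits: "\<forall>x\<in>#E. x \<notin> USR"
    using I \<open>finite I\<close> half_idempotent_not_unit by (auto simp: E_def)
  assume "reducible smul sone (A + image_mset half_idempotent (mset_set I))"
  then obtain T' where T': "T' \<subset># A + E" "seq_prod T' = seq_prod (A + E)"
    unfolding reducible_iff E_def by blast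
  define A' where "A' = filter_mset (\<lambda>x. x \<in> USR) T'"
  define E' where "E' = filter_mset (\<lambda>x. x \<notin> USR) T'"
  have "T' = A' + E'" by (simp add: A'_def E'_def multiset_partition)
  have "\<forall>x\<in>#A. x \<in> USR" using A(1) by blast
  then have "A' \<subseteq># A" "E' \<subseteq># E"
    using filter_mset_subset_of_add[OF subset_mset.less_imp_le[OF T'(1)] _ E_nonunits]
    unfolding A'_def E'_def by blast+
  then obtain I' where I': "I' \<subseteq> I" "E' = image_mset half_idempotent (mset_set I')"
    unfolding E_def using subset_image_mset_mset_set[OF \<open>finite I\<close>] by blast
  have "set_mset A' \<subseteq> USR" by (auto simp: A'_def)
  then have "I' = I"
    using half_idempotents_not_removable I'(1) I T'(2) \<open>T' = A' + E'\<close> I'(2) by (simp add: E_def)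
  then have "E' = E" using I'(2) by (simp add: E_def)
  then have "A' \<noteq> A" using T'(1) \<open>T' = A' + E'\<close> by auto
  moreover have "seq_prod A' = seq_prod A"
    using seq_prod_add_half_idempotents_cancel[OF \<open>set_mset A' \<subseteq> USR\<close> A(1) I]
      T'(2) \<open>T' = A' + E'\<close> \<open>E' = E\<close> by (simp add: E_def)
  ultimately show False using A(2) \<open>A' \<subseteq># A\<close> unfolding reducible_iff
    by (metis subset_mset.le_neq_trans)
qed

lemma davenport_units_add_card_le:
  "davenport USR smul sone + card {i. i < r \<and> 2 dvd n i \<and> \<not> 4 dvd n i}
     \<le> davenport SR smul sone"
proof -
  define I where "I = {i. i < r \<and> 2 dvd n i \<and> \<not> 4 dvd n i}"
  obtain A where A: "set_mset A \<subseteq> USR" "\<not> reducible smul sone A"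
      "davenport USR smul sone - 1 \<le> size A"
    using exists_irreducible_davenport[OF reducible_from_units] by blast
  define T where "T = A + image_mset half_idempotent (mset_set I)"
  have "\<not> reducible smul sone T"
    using irreducible_add_half_idempotents[OF A(1,2)] by (simp add: T_def I_def)
  moreover have "set_mset T \<subseteq> SR"
    using A(1) units_subset_carrier half_idempotent_in_carrier by (auto simp: T_def I_def)
  ultimately have "size T < davenport SR smul sone"
    using size_less_davenport[OF reducible_from_carrier] by blast
  moreover have "size T = size A + card I" by (simp add: T_def)
  moreover have "0 < davenport USR smul sone" by (rule davenport_minimal(1)[OF reducible_from_units])
  ultimately show ?thesis using A(3) unfolding I_def by linarith
qed

end

locale irreducible_index_seq = residue_ring_sum +
  fixes z :: "nat \<Rightarrow> nat \<Rightarrow> nat" and l :: nat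
  assumes irreducible: "J \<subset> {..<l} \<Longrightarrow> index_prod J z \<noteq> index_prod {..<l} z"
begin

definition prefix :: "nat \<Rightarrow> nat \<Rightarrow> nat" where
  "prefix t i = (\<Prod>j<t. z j i)"

definition stabilizes :: "(nat \<Rightarrow> nat) \<Rightarrow> nat \<Rightarrow> bool" where
  "stabilizes h t \<longleftrightarrow> (\<forall>i<r. [h i * prefix t i = prefix t i] (mod n i))"

definition unit_steps :: "nat set" where
  "unit_steps = {t. t < l \<and> (\<exists>g\<in>USR. \<forall>i<r. [g i * prefix t i = prefix (Suc t) i] (mod n i))}"

definition stabilizer_steps :: "nat set" where
  "stabilizer_steps =
     {t. t < l \<and> t \<notin> unit_steps \<and> (\<exists>h\<in>USR. stabilizes h (Suc t) \<and> \<not> stabilizes h t)}"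

definition step_unit :: "nat \<Rightarrow> nat \<Rightarrow> nat" where
  "step_unit t = (if t \<in> unit_steps
     then (SOME g. g \<in> USR \<and> (\<forall>i<r. [g i * prefix t i = prefix (Suc t) i] (mod n i)))
     else (SOME h. h \<in> USR \<and> stabilizes h (Suc t) \<and> \<not> stabilizes h t))"

lemma prefix_Suc: "prefix (Suc t) i = prefix t i * z t i"
  by (simp add: prefix_def)

lemma prefix_split: "t \<le> t' \<Longrightarrow> prefix t' i = prefix t i * (\<Prod>j\<in>{t..<t'}. z j i)"
  using prod.atLeastLessThan_concat[of 0 t t' "\<lambda>j. z j i"] by (simp add: prefix_def atLeast0LessThan)

lemma stabilizes_mono:
  assumes "stabilizes h t" "t \<le> t'"
  shows "stabilizes h t'"
  unfolding stabilizes_def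
proof (intro allI impI)
  fix i assume "i < r"
  then have "[h i * prefix t i * (\<Prod>j\<in>{t..<t'}. z j i) = prefix t i * (\<Prod>j\<in>{t..<t'}. z j i)] (mod n i)"
    using assms(1) unfolding stabilizes_def by (intro cong_mult cong_refl) auto
  then show "[h i * prefix t' i = prefix t' i] (mod n i)"
    unfolding prefix_split[OF assms(2)] by (simp add: mult.assoc)
qed

lemma stabilizes_if_cong_one:
  assumes "\<forall>i<r. [h i = 1] (mod n i)"
  shows "stabilizes h t"
  unfolding stabilizes_def
proof (intro allI impI)
  fix i assume "i < r"
  then have "[h i * prefix t i = 1 * prefix t i] (mod n i)"
    using assms by (intro cong_scalar_right) simp
  then show "[h i * prefix t i = prefix t i] (mod n i)" by simp
qed

lemma stabilizes_mult_cancel: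
  assumes "stabilizes (\<lambda>i. f i * g i) t" "stabilizes g t"
  shows "stabilizes f t"
  unfolding stabilizes_def
proof (intro allI impI)
  fix i assume "i < r"
  then have "[f i * (g i * prefix t i) = f i * prefix t i] (mod n i)"
    using assms(2) by (intro cong_scalar_left) (simp add: stabilizes_def)
  moreover have "[f i * (g i * prefix t i) = prefix t i] (mod n i)"
    using assms(1) \<open>i < r\<close> by (simp add: stabilizes_def mult.assoc)
  ultimately show "[f i * prefix t i = prefix t i] (mod n i)"
    using cong_sym cong_trans by blast
qed

lemma stabilizes_prod:
  assumes "finite V" "\<And>u. u \<in> V \<Longrightarrow> stabilizes (h u) t"
  shows "stabilizes (\<lambda>i. \<Prod>u\<in>V. h u i) t"
  unfolding stabilizes_def
proof (intro allI impI)
  fix i assume "i < r"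
  show "[(\<Prod>u\<in>V. h u i) * prefix t i = prefix t i] (mod n i)"
    by (rule cong_prod_fixes[OF assms(1)]) (use assms(2) \<open>i < r\<close> in \<open>auto simp: stabilizes_def\<close>)
qed

lemma step_unit_at_unit_step:
  assumes "t \<in> unit_steps"
  shows "step_unit t \<in> USR" "\<forall>i<r. [step_unit t i * prefix t i = prefix (Suc t) i] (mod n i)"
proof -
  have "\<exists>g. g \<in> USR \<and> (\<forall>i<r. [g i * prefix t i = prefix (Suc t) i] (mod n i))"
    using assms by (auto simp: unit_steps_def)
  from someI_ex[OF this] assms
  show "step_unit t \<in> USR" "\<forall>i<r. [step_unit t i * prefix t i = prefix (Suc t) i] (mod n i)"
    by (simp_all add: step_unit_def)
qed

lemma step_unit_at_stabilizer_step:
  assumes "t \<in> stabilizer_steps"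
  shows "step_unit t \<in> USR" "stabilizes (step_unit t) (Suc t)" "\<not> stabilizes (step_unit t) t"
proof -
  have "\<exists>h. h \<in> USR \<and> stabilizes h (Suc t) \<and> \<not> stabilizes h t" and "t \<notin> unit_steps"
    using assms by (auto simp: stabilizer_steps_def)
  from someI_ex[OF this(1)] this(2)
  show "step_unit t \<in> USR" "stabilizes (step_unit t) (Suc t)" "\<not> stabilizes (step_unit t) t"
    by (simp_all add: step_unit_def)
qed

lemma step_unit_coprime:
  assumes "t \<in> unit_steps \<union> stabilizer_steps" "i < r"
  shows "coprime (step_unit t i) (n i)"
  using assms step_unit_at_unit_step(1) step_unit_at_stabilizer_step(1) by (auto simp: in_units_iff)

lemma cong_prefix_replace:
  assumes "J \<subseteq> unit_steps" "i < r"
  shows "[(\<Prod>j\<in>{..<t} - J. z j i) * (\<Prod>j\<in>J \<inter> {..<t}. step_unit j i) = prefix t i] (mod n i)"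
proof (induction t)
  case 0
  then show ?case by (simp add: prefix_def)
next
  case (Suc t)
  show ?case
  proof (cases "t \<in> J")
    case True
    then have "{..<Suc t} - J = {..<t} - J" "J \<inter> {..<Suc t} = insert t (J \<inter> {..<t})"
      by (auto simp: less_Suc_eq)
    then have "(\<Prod>j\<in>{..<Suc t} - J. z j i) * (\<Prod>j\<in>J \<inter> {..<Suc t}. step_unit j i)
        = step_unit t i * ((\<Prod>j\<in>{..<t} - J. z j i) * (\<Prod>j\<in>J \<inter> {..<t}. step_unit j i))"
      by (simp add: mult.left_commute)
    also have "[\<dots> = step_unit t i * prefix t i] (mod n i)"
      using Suc.IH by (rule cong_scalar_left)
    also have "[step_unit t i * prefix t i = prefix (Suc t) i] (mod n i)"
      using step_unit_at_unit_step(2) True assms by blast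
    finally show ?thesis .
  next
    case False
    then have "{..<Suc t} - J = insert t ({..<t} - J)" "J \<inter> {..<Suc t} = J \<inter> {..<t}"
      by (auto simp: less_Suc_eq)
    then have "(\<Prod>j\<in>{..<Suc t} - J. z j i) * (\<Prod>j\<in>J \<inter> {..<Suc t}. step_unit j i)
        = ((\<Prod>j\<in>{..<t} - J. z j i) * (\<Prod>j\<in>J \<inter> {..<t}. step_unit j i)) * z t i"
      by (simp add: ac_simps)
    also have "[\<dots> = prefix t i * z t i] (mod n i)"
      using Suc.IH by (rule cong_scalar_right)
    finally show ?thesis by (simp add: prefix_Suc)
  qed
qed

text \<open>Otherwise the terms z j, j \<in> J, could be dropped: replacing them by the units
step_unit j does not change the total product, and these units fix it.\<close>
lemma not_stabilizes_unit_steps_prod: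
  assumes "J \<subseteq> unit_steps" "J \<noteq> {}"
  shows "\<not> stabilizes (\<lambda>i. \<Prod>j\<in>J. step_unit j i) l"
proof
  assume stab: "stabilizes (\<lambda>i. \<Prod>j\<in>J. step_unit j i) l"
  have "J \<subseteq> {..<l}" using assms(1) by (auto simp: unit_steps_def)
  have "index_prod ({..<l} - J) z = index_prod {..<l} z"
    unfolding index_prod_def reduce_eq_iff
  proof (intro allI impI)
    fix i assume "i < r"
    have "coprime (\<Prod>j\<in>J. step_unit j i) (n i)"
      using step_unit_coprime assms(1) \<open>i < r\<close> by (intro prod_coprime_left) blast
    moreover have "[(\<Prod>j\<in>{..<l} - J. z j i) * (\<Prod>j\<in>J. step_unit j i)
        = prefix l i * (\<Prod>j\<in>J. step_unit j i)] (mod n i)"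
      using cong_prefix_replace[OF assms(1) \<open>i < r\<close>, of l] stab \<open>i < r\<close> \<open>J \<subseteq> {..<l}\<close>
      unfolding stabilizes_def by (metis Int_absorb2 cong_sym cong_trans mult.commute)
    ultimately show "[(\<Prod>j\<in>{..<l} - J. z j i) = (\<Prod>j<l. z j i)] (mod n i)"
      by (simp add: cong_mult_rcancel_nat prefix_def)
  qed
  moreover have "{..<l} - J \<subset> {..<l}" using assms(2) \<open>J \<subseteq> {..<l}\<close> by blast
  ultimately show False using irreducible by blast
qed

lemma steps_subset: "unit_steps \<union> stabilizer_steps \<subseteq> {..<l}"
  by (auto simp: unit_steps_def stabilizer_steps_def)

lemma finite_steps: "finite (unit_steps \<union> stabilizer_steps)"
  using steps_subset finite_subset by blast

lemma stabilizes_prod_stabilizer_steps: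
  assumes "V \<subseteq> stabilizer_steps" "\<And>u. u \<in> V \<Longrightarrow> u < t"
  shows "stabilizes (\<lambda>i. \<Prod>u\<in>V. step_unit u i) t"
proof (rule stabilizes_prod)
  show "finite V" using assms(1) finite_steps finite_subset by blast
  show "stabilizes (step_unit u) t" if "u \<in> V" for u
  proof (rule stabilizes_mono)
    show "stabilizes (step_unit u) (Suc u)"
      using that assms(1) step_unit_at_stabilizer_step(2) by blast
    show "Suc u \<le> t" using that assms(2) by (simp add: Suc_le_eq)
  qed
qed

lemma no_unit_relation:
  assumes W: "W \<subseteq> unit_steps \<union> stabilizer_steps" "W \<noteq> {}"
    and one: "\<forall>i<r. [(\<Prod>u\<in>W. step_unit u i) = 1] (mod n i)"
  shows False
proof -
  have "finite W" using W(1) finite_steps finite_subset by blast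
  define WU where "WU = W \<inter> unit_steps"
  define WS where "WS = W \<inter> stabilizer_steps"
  have "W = WU \<union> WS" "WU \<inter> WS = {}" using W(1) by (auto simp: WU_def WS_def stabilizer_steps_def)
  have stab_W: "stabilizes (\<lambda>i. \<Prod>u\<in>W. step_unit u i) t" for t
    using one by (rule stabilizes_if_cong_one)
  show False
  proof (cases "WU = {}")
    case False
    have "stabilizes (\<lambda>i. (\<Prod>u\<in>WU. step_unit u i) * (\<Prod>u\<in>WS. step_unit u i)) l"
      using stab_W[of l] \<open>W = WU \<union> WS\<close> \<open>WU \<inter> WS = {}\<close> \<open>finite W\<close> by (simp add: prod.union_disjoint)
    moreover have "stabilizes (\<lambda>i. \<Prod>u\<in>WS. step_unit u i) l"
      by (rule stabilizes_prod_stabilizer_steps) (auto simp: WS_def stabilizer_steps_def)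
    ultimately have "stabilizes (\<lambda>i. \<Prod>u\<in>WU. step_unit u i) l"
      by (rule stabilizes_mult_cancel)
    then show False using not_stabilizes_unit_steps_prod False by (auto simp: WU_def)
  next
    case True
    define t where "t = Max W"
    have "t \<in> WS" using True \<open>W = WU \<union> WS\<close> W(2) \<open>finite W\<close> by (simp add: t_def)
    then have "(\<lambda>i. \<Prod>u\<in>W. step_unit u i) = (\<lambda>i. step_unit t i * (\<Prod>u\<in>W - {t}. step_unit u i))"
      using \<open>finite W\<close> by (intro ext prod.remove) (auto simp: WS_def)
    then have "stabilizes (\<lambda>i. step_unit t i * (\<Prod>u\<in>W - {t}. step_unit u i)) t"
      using stab_W[of t] by simp
    moreover have "stabilizes (\<lambda>i. \<Prod>u\<in>W - {t}. step_unit u i) t"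
    proof (rule stabilizes_prod_stabilizer_steps)
      show "W - {t} \<subseteq> stabilizer_steps" using True \<open>W = WU \<union> WS\<close> by (auto simp: WS_def)
      show "u < t" if "u \<in> W - {t}" for u
        using that Max_ge[OF \<open>finite W\<close>] by (fastforce simp: t_def)
    qed
    ultimately have "stabilizes (step_unit t) t"
      by (rule stabilizes_mult_cancel)
    then show False using step_unit_at_stabilizer_step(3) \<open>t \<in> WS\<close> by (auto simp: WS_def)
  qed
qed

lemma irreducible_step_units:
  "\<not> reducible smul sone (image_mset step_unit (mset_set (unit_steps \<union> stabilizer_steps)))"
proof
  define Q where "Q = unit_steps \<union> stabilizer_steps"
  have "finite Q" unfolding Q_def by (rule finite_steps)
  assume "reducible smul sone (image_mset step_unit (mset_set (unit_steps \<union> stabilizer_steps)))"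
  then obtain J where J: "J \<subset> Q" "index_prod J step_unit = index_prod Q step_unit"
    using reducible_image_iff[OF \<open>finite Q\<close>] Q_def by blast
  have "[(\<Prod>u\<in>Q - J. step_unit u i) = 1] (mod n i)" if "i < r" for i
  proof -
    have "(\<Prod>u\<in>Q. step_unit u i) = (\<Prod>u\<in>J. step_unit u i) * (\<Prod>u\<in>Q - J. step_unit u i)"
      using prod.subset_diff[of J Q "\<lambda>u. step_unit u i"] J(1) \<open>finite Q\<close> by (auto simp: mult.commute)
    moreover have "[(\<Prod>u\<in>J. step_unit u i) = (\<Prod>u\<in>Q. step_unit u i)] (mod n i)"
      using J(2) that unfolding index_prod_def reduce_eq_iff by blast
    moreover have "coprime (\<Prod>u\<in>J. step_unit u i) (n i)"
      using step_unit_coprime J(1) that unfolding Q_def by (intro prod_coprime_left) blast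
    ultimately show ?thesis
      by (metis cong_mult_lcancel_nat cong_sym mult.right_neutral)
  qed
  moreover have "Q - J \<subseteq> unit_steps \<union> stabilizer_steps" "Q - J \<noteq> {}" using J(1) Q_def by auto
  ultimately show False using no_unit_relation by blast
qed

lemma card_steps_less_davenport:
  "card (unit_steps \<union> stabilizer_steps) < davenport USR smul sone"
proof -
  have "set_mset (image_mset step_unit (mset_set (unit_steps \<union> stabilizer_steps))) \<subseteq> USR"
    using step_unit_at_unit_step(1) step_unit_at_stabilizer_step(1) finite_steps by auto
  then show ?thesis
    using size_less_davenport[OF reducible_from_units _ irreducible_step_units] by simp
qed

lemma stabilizer_step_if_coordinate_stabilizer:
  assumes "t < l" "t \<notin> unit_steps" "i < r" "coprime u (n i)"
    and fixes_Suc: "[u * prefix (Suc t) i = prefix (Suc t) i] (mod n i)"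
    and moves: "\<not> [u * prefix t i = prefix t i] (mod n i)"
  shows "t \<in> stabilizer_steps"
proof -
  define h where "h = reduce (\<lambda>k. if k = i then u else 1)"
  have h_cong: "[h k * x = (if k = i then u else 1) * x] (mod n k)" if "k < r" for k x
    unfolding h_def using reduce_cong[OF that] by (rule cong_scalar_right)
  have "stabilizes h (Suc t)"
    unfolding stabilizes_def
  proof (intro allI impI)
    fix k assume "k < r"
    show "[h k * prefix (Suc t) k = prefix (Suc t) k] (mod n k)"
    proof (cases "k = i")
      case True
      then have "[h k * prefix (Suc t) k = u * prefix (Suc t) k] (mod n k)"
        using h_cong[OF \<open>k < r\<close>] by simp
      then show ?thesis using fixes_Suc True by (blast intro: cong_trans)
    next
      case False
      then show ?thesis using h_cong[OF \<open>k < r\<close>] by simp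
    qed
  qed
  moreover have "\<not> stabilizes h t"
  proof
    assume "stabilizes h t"
    then have "[h i * prefix t i = prefix t i] (mod n i)" using assms(3) by (simp add: stabilizes_def)
    moreover have "[h i * prefix t i = u * prefix t i] (mod n i)" using h_cong[OF assms(3)] by simp
    ultimately show False using moves by (blast intro: cong_trans cong_sym)
  qed
  moreover have "h \<in> USR" using assms(4) by (simp add: h_def reduce_in_units_iff)
  ultimately show ?thesis using assms(1,2) by (auto simp: stabilizer_steps_def)
qed

lemma unit_step_if_coordinate_units:
  assumes "t < l"
    and "\<And>i. i < r \<Longrightarrow> coprime (u i) (n i) \<and> [u i * prefix t i = prefix (Suc t) i] (mod n i)"
  shows "t \<in> unit_steps"
proof -
  have "reduce u \<in> USR" using assms(2) by (simp add: reduce_in_units_iff)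
  moreover have "[reduce u i * prefix t i = prefix (Suc t) i] (mod n i)" if "i < r" for i
    using cong_scalar_right[OF reduce_cong[OF that]] assms(2)[OF that] cong_trans by blast
  ultimately show ?thesis using assms(1) by (auto simp: unit_steps_def)
qed

lemma parity_jump:
  assumes "t < l" "t \<notin> unit_steps \<union> stabilizer_steps"
  shows "\<exists>i<r. even (n i div gcd (prefix t i) (n i)) \<and> odd (n i div gcd (prefix (Suc t) i) (n i))"
proof (rule ccontr)
  assume no_jump: "\<not> ?thesis"
  have step_cases: "(\<exists>u. coprime u (n i) \<and> [u * prefix t i = prefix (Suc t) i] (mod n i))
    \<or> (\<exists>u. coprime u (n i) \<and> [u * prefix (Suc t) i = prefix (Suc t) i] (mod n i)
          \<and> \<not> [u * prefix t i = prefix t i] (mod n i))" if "i < r" for i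
  proof -
    have "prefix t i dvd prefix (Suc t) i" by (simp add: prefix_Suc)
    then show ?thesis using dvd_step_cases[OF moduli_pos[OF that]] no_jump that by blast
  qed
  show False
  proof (cases "\<exists>i<r. \<exists>u. coprime u (n i) \<and> [u * prefix (Suc t) i = prefix (Suc t) i] (mod n i)
                     \<and> \<not> [u * prefix t i = prefix t i] (mod n i)")
    case True
    then show False using stabilizer_step_if_coordinate_stabilizer assms by blast
  next
    case False
    then have "\<forall>i. \<exists>u. i < r \<longrightarrow> coprime u (n i) \<and> [u * prefix t i = prefix (Suc t) i] (mod n i)"
      using step_cases by blast
    then obtain u where "\<And>i. i < r \<Longrightarrow> coprime (u i) (n i) \<and> [u i * prefix t i = prefix (Suc t) i] (mod n i)"
      by metis
    then show False using unit_step_if_coordinate_units assms by blast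
  qed
qed

lemma card_other_steps:
  "card ({..<l} - (unit_steps \<union> stabilizer_steps)) \<le> card {i. i < r \<and> 2 dvd n i}"
proof -
  define Other where "Other = {..<l} - (unit_steps \<union> stabilizer_steps)"
  define jump where "jump t = (SOME i. i < r \<and> even (n i div gcd (prefix t i) (n i))
                                    \<and> odd (n i div gcd (prefix (Suc t) i) (n i)))" for t
  have jump: "jump t < r" "even (n (jump t) div gcd (prefix t (jump t)) (n (jump t)))"
      "odd (n (jump t) div gcd (prefix (Suc t) (jump t)) (n (jump t)))" if "t \<in> Other" for t
    using someI_ex[OF parity_jump[unfolded Bex_def]] that unfolding jump_def Other_def by blast+
  have "inj_on jump Other"
  proof (rule linorder_inj_onI')
    fix t t' assume "t \<in> Other" "t' \<in> Other" "t < t'"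
    have "prefix (Suc t) i dvd prefix t' i" for i
      using prefix_split[of "Suc t" t'] \<open>t < t'\<close> by simp
    show "jump t \<noteq> jump t'"
    proof
      assume "jump t = jump t'"
      then have "odd (n (jump t') div gcd (prefix t' (jump t')) (n (jump t')))"
        using div_gcd_dvd_div_gcd[OF \<open>prefix (Suc t) (jump t') dvd prefix t' (jump t')\<close>]
          moduli_pos jump[OF \<open>t \<in> Other\<close>] jump[OF \<open>t' \<in> Other\<close>] by (metis dvd_trans)
      then show False using jump(2)[OF \<open>t' \<in> Other\<close>] by simp
    qed
  qed
  moreover have "jump ` Other \<subseteq> {i. i < r \<and> 2 dvd n i}"
  proof clarify
    fix t assume "t \<in> Other"
    define i where "i = jump t"
    have "(n i div gcd (prefix t i) (n i)) * gcd (prefix t i) (n i) = n i"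
      by (rule dvd_div_mult_self) simp
    then have "(n i div gcd (prefix t i) (n i)) dvd n i" by (metis dvd_triv_left)
    then show "jump t < r \<and> 2 dvd n (jump t)"
      using jump[OF \<open>t \<in> Other\<close>] dvd_trans unfolding i_def by blast
  qed
  ultimately show ?thesis unfolding Other_def[symmetric]
    by (intro card_inj_on_le) auto
qed

lemma length_less_davenport:
  "l < davenport USR smul sone + card {i. i < r \<and> 2 dvd n i}"
proof -
  have "l = card (unit_steps \<union> stabilizer_steps) + card ({..<l} - (unit_steps \<union> stabilizer_steps))"
    using steps_subset finite_steps card_mono[of "{..<l}"] by (simp add: card_Diff_subset)
  then show ?thesis using card_steps_less_davenport card_other_steps by linarith
qed

end

context residue_ring_sum
begin

lemma davenport_le_units_add_card:
  "davenport SR smul sone \<le> davenport USR smul sone + card {i. i < r \<and> 2 dvd n i}"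
proof (rule davenport_le)
  show "0 < davenport USR smul sone + card {i. i < r \<and> 2 dvd n i}"
    using davenport_minimal(1)[OF reducible_from_units] by simp
  show "reducible_from SR smul sone (davenport USR smul sone + card {i. i < r \<and> 2 dvd n i})"
    unfolding reducible_from_def
  proof (intro allI impI)
    fix T assume T: "set_mset T \<subseteq> SR \<and> davenport USR smul sone + card {i. i < r \<and> 2 dvd n i} \<le> size T"
    define l where "l = size T"
    obtain z where T_eq: "T = image_mset z (mset_set {..<l})"
      unfolding l_def using ex_image_mset_lessThan by blast
    show "reducible smul sone T"
    proof (rule ccontr)
      assume "\<not> reducible smul sone T"
      then interpret irreducible_index_seq r n z l
        by unfold_locales (auto simp: T_eq reducible_image_iff)
      show False using length_less_davenport T by (simp add: l_def)
    qed
  qed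
qed

end

theorem theorem1p1:
  fixes r :: nat and n :: "nat \<Rightarrow> nat"
  assumes "1 \<le> r"
    and "\<forall>i<r. 1 < n i"
  shows "davenport (monoid_units (SR_carrier r n) (SR_mult r n) (SR_one r n)) (SR_mult r n) (SR_one r n)
           + card {i. i < r \<and> 2 dvd n i \<and> \<not> 4 dvd n i}
         \<le> davenport (SR_carrier r n) (SR_mult r n) (SR_one r n)
       \<and> davenport (SR_carrier r n) (SR_mult r n) (SR_one r n)
         \<le> davenport (monoid_units (SR_carrier r n) (SR_mult r n) (SR_one r n)) (SR_mult r n) (SR_one r n)
           + card {i. i < r \<and> 2 dvd n i}"
proof -
  interpret residue_ring_sum r n using assms(2) by unfold_locales blast
  show ?thesis using davenport_units_add_card_le davenport_le_units_add_card by blast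
qed

end
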